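(* Let $n>2$, $V=\mathbb{F}_2^n$ with canonical basis $e_1,\dots,e_n$, and let $W=\langle e_3,\dots,e_n\rangle$. For $b\in W\setminus\{0\}$ define $\pi_b,\varepsilon_b\in\mathrm{Sym}(V)$ by $$x\pi_b=x+x^{(2)}b+e_1,\qquad x\varepsilon_b=x+x^{(1)}b+e_2,$$ and let $T_b=\langle \pi_b,\varepsilon_b,\sigma_{e_i}\mid 3\le i\le n\rangle$. Then the elementary abelian regular subgroups $R$ of $\mathrm{Sym}(V)$ with $T\cap R=\sigma_W$ are exactly the groups $T_b$, $b\in W\setminus\{0\}$, and these are pairwise distinct; in particular there are exactly $2^{n-2}-1$ of them.
   Context: For $v\in V$, $v^{(i)}\in\mathbb{F}_2$ is its $i$-th coordinate. $T=\{\sigma_v:v\in V\}$ with $\sigma_v:x\mapsto x+v$; $\sigma_W=\{\sigma_w:w\in W\}$. Permutations act on the right. *)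

theory Defs
  imports "HOL-Algebra.Bij" "HOL-Algebra.Generated_Groups"
begin

text \<open>V = F_2^n: vectors are functions nat \<Rightarrow> bool (bool = F_2, True = 1) supported on the
  coordinates 1..n; v i is the i-th coordinate.\<close>

type_synonym vec = "nat \<Rightarrow> bool"

definition Vsp :: "nat \<Rightarrow> vec set" where
  "Vsp n = {v. \<forall>i. v i \<longrightarrow> 1 \<le> i \<and> i \<le> n}"

definition vzero :: vec where "vzero = (\<lambda>_. False)"

definition vadd :: "vec \<Rightarrow> vec \<Rightarrow> vec" where
  "vadd x y = (\<lambda>i. x i \<noteq> y i)"

definition smult :: "bool \<Rightarrow> vec \<Rightarrow> vec" where
  "smult c v = (\<lambda>i. c \<and> v i)"

definition ebas :: "nat \<Rightarrow> vec" where
  "ebas i = (\<lambda>j. j = i)"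

definition Wsp :: "nat \<Rightarrow> vec set" where
  "Wsp n = {v \<in> Vsp n. \<not> v 1 \<and> \<not> v 2}"

abbreviation SymV :: "nat \<Rightarrow> (vec \<Rightarrow> vec) monoid" where
  "SymV n \<equiv> BijGroup (Vsp n)"

definition transl :: "nat \<Rightarrow> vec \<Rightarrow> (vec \<Rightarrow> vec)" where
  "transl n v = (\<lambda>x\<in>Vsp n. vadd x v)"

definition pi_b :: "nat \<Rightarrow> vec \<Rightarrow> (vec \<Rightarrow> vec)" where
  "pi_b n b = (\<lambda>x\<in>Vsp n. vadd (vadd x (smult (x 2) b)) (ebas 1))"

definition eps_b :: "nat \<Rightarrow> vec \<Rightarrow> (vec \<Rightarrow> vec)" where
  "eps_b n b = (\<lambda>x\<in>Vsp n. vadd (vadd x (smult (x 1) b)) (ebas 2))"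

definition T_b :: "nat \<Rightarrow> vec \<Rightarrow> (vec \<Rightarrow> vec) set" where
  "T_b n b = generate (SymV n)
     ({pi_b n b, eps_b n b} \<union> {transl n (ebas i) | i. 3 \<le> i \<and> i \<le> n})"

definition elem_abelian :: "('a, 'b) monoid_scheme \<Rightarrow> 'a set \<Rightarrow> bool" where
  "elem_abelian G R \<longleftrightarrow> (\<forall>g\<in>R. \<forall>h\<in>R. g \<otimes>\<^bsub>G\<^esub> h = h \<otimes>\<^bsub>G\<^esub> g) \<and>
                        (\<forall>g\<in>R. g \<otimes>\<^bsub>G\<^esub> g = \<one>\<^bsub>G\<^esub>)"

definition regular_on :: "'a set \<Rightarrow> ('a \<Rightarrow> 'a) set \<Rightarrow> bool" where
  "regular_on S R \<longleftrightarrow> (\<forall>x\<in>S. \<forall>y\<in>S. \<exists>!g. g \<in> R \<and> g x = y)"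

definition good_subgroups :: "nat \<Rightarrow> (vec \<Rightarrow> vec) set set" where
  "good_subgroups n = {R. subgroup R (SymV n) \<and> elem_abelian (SymV n) R \<and>
      regular_on (Vsp n) R \<and> transl n ` Vsp n \<inter> R = transl n ` Wsp n}"

end

theory Submission
  imports Defs
begin

text \<open>
  For \<open>b \<in> W\<close> put \<open>u \<oplus> v = u + v + \<omega>(u, v) b\<close>, where \<open>\<omega>(u, v) = u\<^sub>1 v\<^sub>2 + u\<^sub>2 v\<^sub>1\<close>.
  Since \<open>\<omega>\<close> is alternating and vanishes on \<open>W\<close>, \<open>\<oplus>\<close> is an elementary abelian group law on \<open>V\<close>, and
  \<open>T\<^sub>b\<close> is its regular representation \<open>x \<mapsto> x \<oplus> u\<close>: it contains \<open>\<sigma>\<^sub>W\<close>, meets \<open>T\<close> only there when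
  \<open>b \<noteq> 0\<close>, and determines \<open>b = e\<^sub>2 \<oplus> e\<^sub>1 + e\<^sub>1 + e\<^sub>2\<close>.

  Conversely let \<open>R\<close> be good and \<open>\<tau>\<^sub>u\<close> its element with \<open>0 \<mapsto> u\<close>. As \<open>R\<close> centralises \<open>\<sigma>\<^sub>W\<close>, every
  \<open>g \<in> R\<close> permutes \<open>V/W \<cong> \<bool>\<^sub>2\<^sup>2\<close> by an involution, which is a translation: either \<open>g\<close> fixes a
  coset and then, commuting with the transitive \<open>R\<close>, is itself a translation by an element of \<open>W\<close>,
  or it is fixed-point-free on four points. Hence the defect \<open>\<tau>\<^sub>u v + u + v\<close> lies in \<open>W\<close> and
  depends only on the cosets of \<open>u\<close> and \<open>v\<close>; it is symmetric, vanishes on the diagonal, and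
  \<open>\<tau>\<^sub>u \<tau>\<^sub>u = 1\<close> makes its three remaining values agree. So it equals \<open>\<omega>(u, v) b\<close> for a single
  \<open>b \<in> W - {0}\<close>, i.e. \<open>R = T\<^sub>b\<close>, and there are \<open>|W| - 1 = 2\<^sup>n\<^sup>-\<^sup>2 - 1\<close> such groups.
\<close>

section \<open>Vectors and the subspace \<open>W\<close>\<close>

lemmas vec_defs = vzero_def vadd_def smult_def ebas_def

lemma vadd_assoc: "vadd (vadd x y) z = vadd x (vadd y z)"
  by (auto simp: vadd_def)

lemma vadd_commute: "vadd x y = vadd y x"
  by (auto simp: vadd_def)

lemma vadd_left_commute: "vadd x (vadd y z) = vadd y (vadd x z)"
  by (auto simp: vadd_def)

lemmas vadd_ac = vadd_assoc vadd_commute vadd_left_commute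

lemma vadd_self [simp]: "vadd x x = vzero"
  by (simp add: vadd_def vzero_def)

lemma vadd_vzero [simp]: "vadd x vzero = x" "vadd vzero x = x"
  by (simp_all add: vadd_def vzero_def)

lemma vadd_cancel [simp]: "vadd x (vadd x y) = y"
  by (auto simp: vadd_def)

lemma smult_True [simp]: "smult True v = v"
  and smult_False [simp]: "smult False v = vzero"
  by (simp_all add: smult_def vzero_def)

lemma vadd_Vsp [simp]: "x \<in> Vsp n \<Longrightarrow> y \<in> Vsp n \<Longrightarrow> vadd x y \<in> Vsp n"
  by (auto simp: Vsp_def vadd_def)

lemma smult_Vsp [simp]: "x \<in> Vsp n \<Longrightarrow> smult c x \<in> Vsp n"
  by (auto simp: Vsp_def smult_def)

lemma vzero_Vsp [simp]: "vzero \<in> Vsp n"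
  by (simp add: Vsp_def vzero_def)

lemma ebas_Vsp: "1 \<le> i \<Longrightarrow> i \<le> n \<Longrightarrow> ebas i \<in> Vsp n"
  by (auto simp: Vsp_def ebas_def)

lemma ebas_Wsp: "3 \<le> i \<Longrightarrow> i \<le> n \<Longrightarrow> ebas i \<in> Wsp n"
  by (auto simp: Wsp_def Vsp_def ebas_def)

lemma Wsp_Vsp: "w \<in> Wsp n \<Longrightarrow> w \<in> Vsp n"
  by (simp add: Wsp_def)

lemma vzero_Wsp: "vzero \<in> Wsp n"
  by (simp add: Wsp_def) (simp add: vzero_def)

lemma Wsp_eq_indicators: "Wsp n = (\<lambda>A i. i \<in> A) ` Pow {3..n}"
proof (intro equalityI subsetI)
  fix v assume v: "v \<in> Wsp n"
  have "i \<in> {3..n}" if "v i" for i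
  proof -
    have "1 \<le> i" "i \<le> n" "i \<noteq> 1" "i \<noteq> 2"
      using v that by (auto simp: Wsp_def Vsp_def)
    then show ?thesis by auto
  qed
  then have "{i. v i} \<in> Pow {3..n}" by blast
  then show "v \<in> (\<lambda>A i. i \<in> A) ` Pow {3..n}"
    by (rule rev_image_eqI) simp
qed (auto simp: Wsp_def Vsp_def)

lemma card_Wsp: "card (Wsp n) = 2 ^ (n - 2)"
proof -
  have "inj_on (\<lambda>A i. i \<in> A) (Pow {3..n})"
    by (rule inj_onI) (auto simp: fun_eq_iff)
  then have "card (Wsp n) = card (Pow {3..n})"
    unfolding Wsp_eq_indicators by (rule card_image)
  also have "\<dots> = 2 ^ (n - 2)"
    by (simp add: card_Pow)
  finally show ?thesis .
qed

lemma finite_Wsp: "finite (Wsp n)"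
  by (simp add: Wsp_eq_indicators)

lemma transl_at_vzero: "transl n v vzero = v"
  by (simp add: transl_def)

lemma BijGroup_carrier: "carrier (BijGroup S) = Bij S"
  by (simp add: BijGroup_def)

lemma BijGroup_mult: "f \<in> Bij S \<Longrightarrow> g \<in> Bij S \<Longrightarrow> f \<otimes>\<^bsub>BijGroup S\<^esub> g = compose S f g"
  by (simp add: BijGroup_def)

lemma BijGroup_one: "\<one>\<^bsub>BijGroup S\<^esub> = (\<lambda>x\<in>S. x)"
  by (simp add: BijGroup_def)

section \<open>The groups \<open>T\<^sub>b\<close>\<close>

definition symp12 :: "vec \<Rightarrow> vec \<Rightarrow> bool" where
  "symp12 x y \<longleftrightarrow> (x 1 \<and> y 2) \<noteq> (x 2 \<and> y 1)"

definition twisted_sum :: "vec \<Rightarrow> vec \<Rightarrow> vec \<Rightarrow> vec" where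
  "twisted_sum b u v = vadd (vadd u v) (smult (symp12 u v) b)"

definition twisted_transl :: "nat \<Rightarrow> vec \<Rightarrow> vec \<Rightarrow> (vec \<Rightarrow> vec)" where
  "twisted_transl n b u = (\<lambda>x\<in>Vsp n. twisted_sum b x u)"

definition twisted_group :: "nat \<Rightarrow> vec \<Rightarrow> (vec \<Rightarrow> vec) set" where
  "twisted_group n b = twisted_transl n b ` Vsp n"

lemma symp12_commute: "symp12 x y = symp12 y x"
  by (auto simp: symp12_def)

lemmas twisted_defs = twisted_sum_def symp12_def vec_defs

lemma twisted_sum_commute: "twisted_sum b u v = twisted_sum b v u"
  by (auto simp: twisted_defs fun_eq_iff)

lemma twisted_sum_self: "twisted_sum b u u = vzero"
  by (auto simp: twisted_defs fun_eq_iff)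

lemma twisted_sum_vzero: "twisted_sum b u vzero = u"
  by (auto simp: twisted_defs fun_eq_iff)

lemma twisted_sum_vzero_left: "twisted_sum b vzero u = u"
  by (auto simp: twisted_defs fun_eq_iff)

lemma twisted_sum_Wsp: "w \<in> Wsp n \<Longrightarrow> twisted_sum b u w = vadd u w"
  by (auto simp: Wsp_def twisted_defs fun_eq_iff)

lemma twisted_sum_vzero_twist: "twisted_sum vzero u v = vadd u v"
  by (auto simp: twisted_defs fun_eq_iff)

lemma twisted_sum_Vsp: "b \<in> Vsp n \<Longrightarrow> u \<in> Vsp n \<Longrightarrow> v \<in> Vsp n \<Longrightarrow> twisted_sum b u v \<in> Vsp n"
  by (simp add: twisted_sum_def)

lemma twisted_sum_assoc:
  assumes "b \<in> Wsp n"
  shows "twisted_sum b (twisted_sum b x y) z = twisted_sum b x (twisted_sum b y z)"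
  using assms by (auto simp: Wsp_def twisted_defs fun_eq_iff)

lemma twisted_transl_apply [simp]: "x \<in> Vsp n \<Longrightarrow> twisted_transl n b u x = twisted_sum b x u"
  by (simp add: twisted_transl_def)

lemma twisted_transl_vzero: "twisted_transl n b u vzero = u"
  by (simp add: twisted_sum_vzero_left)

lemma twisted_transl_Wsp: "w \<in> Wsp n \<Longrightarrow> twisted_transl n b w = transl n w"
  by (simp add: twisted_transl_def transl_def twisted_sum_Wsp)

context
  fixes n :: nat and b :: vec
  assumes b: "b \<in> Wsp n"
begin

lemma twisted_transl_involution:
  "u \<in> Vsp n \<Longrightarrow> x \<in> Vsp n \<Longrightarrow> twisted_transl n b u (twisted_transl n b u x) = x"
  using b Wsp_Vsp[OF b]
  by (simp add: twisted_sum_Vsp twisted_sum_assoc twisted_sum_self twisted_sum_vzero)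

lemma twisted_transl_Bij:
  assumes "u \<in> Vsp n"
  shows "twisted_transl n b u \<in> Bij (Vsp n)"
proof -
  have closed: "twisted_sum b x u \<in> Vsp n" if "x \<in> Vsp n" for x
    using that assms Wsp_Vsp[OF b] by (simp add: twisted_sum_Vsp)
  have "bij_betw (twisted_transl n b u) (Vsp n) (Vsp n)"
    using twisted_transl_involution[OF assms] closed
    by (intro bij_betw_byWitness[where f' = "twisted_transl n b u"]) auto
  then show ?thesis
    by (simp add: Bij_def twisted_transl_def)
qed

lemma twisted_transl_mult:
  assumes "u \<in> Vsp n" "v \<in> Vsp n"
  shows "twisted_transl n b u \<otimes>\<^bsub>SymV n\<^esub> twisted_transl n b v = twisted_transl n b (twisted_sum b u v)"
proof (rule extensionalityI)
  show "twisted_transl n b u \<otimes>\<^bsub>SymV n\<^esub> twisted_transl n b v \<in> extensional (Vsp n)"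
    using assms by (simp add: BijGroup_mult twisted_transl_Bij)
  fix x assume "x \<in> Vsp n"
  then show "(twisted_transl n b u \<otimes>\<^bsub>SymV n\<^esub> twisted_transl n b v) x =
      twisted_transl n b (twisted_sum b u v) x"
    using assms Wsp_Vsp[OF b]
    by (simp add: BijGroup_mult twisted_transl_Bij compose_def twisted_sum_Vsp
        twisted_sum_assoc[OF b] twisted_sum_commute[of b u v])
qed (simp add: twisted_transl_def)

lemma twisted_transl_vzero_one: "twisted_transl n b vzero = \<one>\<^bsub>SymV n\<^esub>"
  by (simp add: BijGroup_one twisted_transl_def twisted_sum_vzero)

lemma twisted_group_subgroup: "subgroup (twisted_group n b) (SymV n)"
proof (rule group.subgroupI[OF group_BijGroup])
  show "twisted_group n b \<subseteq> carrier (SymV n)"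
    by (auto simp: twisted_group_def BijGroup_carrier twisted_transl_Bij)
  show "twisted_group n b \<noteq> {}"
    unfolding twisted_group_def using vzero_Vsp[of n] by blast
next
  fix g assume "g \<in> twisted_group n b"
  then obtain u where u: "u \<in> Vsp n" "g = twisted_transl n b u"
    by (auto simp: twisted_group_def)
  have "inv\<^bsub>SymV n\<^esub> g = g"
    using u by (intro group.inv_equality[OF group_BijGroup])
      (simp_all add: twisted_transl_mult twisted_sum_self twisted_transl_vzero_one
        BijGroup_carrier twisted_transl_Bij)
  then show "inv\<^bsub>SymV n\<^esub> g \<in> twisted_group n b"
    using \<open>g \<in> twisted_group n b\<close> by simp
next
  fix g h assume "g \<in> twisted_group n b" "h \<in> twisted_group n b"
  then show "g \<otimes>\<^bsub>SymV n\<^esub> h \<in> twisted_group n b"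
    using Wsp_Vsp[OF b]
    by (auto simp: twisted_group_def twisted_transl_mult twisted_sum_Vsp)
qed

lemma twisted_group_elem_abelian: "elem_abelian (SymV n) (twisted_group n b)"
  by (auto simp: elem_abelian_def twisted_group_def twisted_transl_mult twisted_sum_self
      twisted_transl_vzero_one twisted_sum_commute)

lemma twisted_group_regular: "regular_on (Vsp n) (twisted_group n b)"
  unfolding regular_on_def
proof (intro ballI)
  fix x y assume x: "x \<in> Vsp n" and y: "y \<in> Vsp n"
  have cancel: "twisted_sum b x (twisted_sum b x v) = v" for v
    by (simp flip: twisted_sum_assoc[OF b] add: twisted_sum_self twisted_sum_vzero_left)
  show "\<exists>!g. g \<in> twisted_group n b \<and> g x = y"
  proof (rule ex1I[of _ "twisted_transl n b (twisted_sum b x y)"])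
    show "twisted_transl n b (twisted_sum b x y) \<in> twisted_group n b \<and>
        twisted_transl n b (twisted_sum b x y) x = y"
      using x y Wsp_Vsp[OF b] cancel by (simp add: twisted_group_def twisted_sum_Vsp)
    fix g assume "g \<in> twisted_group n b \<and> g x = y"
    then obtain u where "g = twisted_transl n b u" "twisted_sum b x u = y"
      using x by (auto simp: twisted_group_def)
    then show "g = twisted_transl n b (twisted_sum b x y)"
      using cancel by metis
  qed
qed

lemma transl_inter_twisted_group:
  assumes "2 \<le> n" "b \<noteq> vzero"
  shows "transl n ` Vsp n \<inter> twisted_group n b = transl n ` Wsp n"
proof (intro equalityI subsetI)
  fix g assume "g \<in> transl n ` Vsp n \<inter> twisted_group n b"
  then obtain v u where v: "v \<in> Vsp n" "g = transl n v" and u: "u \<in> Vsp n" "g = twisted_transl n b u"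
    by (auto simp: twisted_group_def)
  then have "v = u"
    by (metis transl_at_vzero twisted_transl_vzero)
  obtain i where "b i"
    using assms(2) by (auto simp: vzero_def)
  have untwisted: "\<not> symp12 x v" if "x \<in> Vsp n" for x
  proof -
    have "transl n v x = twisted_transl n b v x"
      using v u \<open>v = u\<close> by simp
    then have "vadd x v = twisted_sum b x v"
      using that by (simp add: transl_def)
    then have "smult (symp12 x v) b = vzero"
      by (auto simp: twisted_sum_def vadd_def vzero_def fun_eq_iff)
    then show ?thesis
      using \<open>b i\<close> by (auto simp: smult_def vzero_def fun_eq_iff)
  qed
  have e: "ebas 1 \<in> Vsp n" "ebas 2 \<in> Vsp n"
    using assms(1) by (simp_all add: ebas_Vsp)
  have "\<not> v 2" "\<not> v 1"
    using untwisted[OF e(1)] untwisted[OF e(2)] by (simp_all add: symp12_def ebas_def)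
  then show "g \<in> transl n ` Wsp n"
    using v by (simp add: Wsp_def)
next
  fix g assume "g \<in> transl n ` Wsp n"
  then obtain w where w: "w \<in> Wsp n" "g = transl n w" by blast
  then show "g \<in> transl n ` Vsp n \<inter> twisted_group n b"
    using rev_image_eqI[OF Wsp_Vsp[OF w(1)] twisted_transl_Wsp[OF w(1), of b, symmetric]] Wsp_Vsp[OF w(1)]
    by (auto simp: twisted_group_def)
qed

lemma twisted_group_good:
  "2 \<le> n \<Longrightarrow> b \<noteq> vzero \<Longrightarrow> twisted_group n b \<in> good_subgroups n"
  by (simp add: good_subgroups_def twisted_group_subgroup twisted_group_elem_abelian
      twisted_group_regular transl_inter_twisted_group)

end

context
  fixes n :: nat and b :: vec and H :: "(vec \<Rightarrow> vec) set"
  assumes b: "b \<in> Wsp n" and H: "subgroup H (SymV n)"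
    and basis: "\<And>i. 1 \<le> i \<Longrightarrow> i \<le> n \<Longrightarrow> twisted_transl n b (ebas i) \<in> H"
begin

lemma twisted_transl_twisted_sum_mem:
  assumes "u \<in> Vsp n" "v \<in> Vsp n" "twisted_transl n b u \<in> H" "twisted_transl n b v \<in> H"
  shows "twisted_transl n b (twisted_sum b u v) \<in> H"
  using subgroup.m_closed[OF H assms(3,4)] by (simp add: twisted_transl_mult[OF b assms(1,2)])

lemma twisted_transl_Wsp_mem:
  assumes "w \<in> Wsp n"
  shows "twisted_transl n b w \<in> H"
proof -
  obtain A where A: "A \<subseteq> {3..n}" "w = (\<lambda>i. i \<in> A)"
    using assms by (auto simp: Wsp_eq_indicators)
  from finite_subset[OF A(1) finite_atLeastAtMost] A(1) have "twisted_transl n b (\<lambda>i. i \<in> A) \<in> H"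
  proof (induction A rule: finite_subset_induct')
    case empty
    show ?case
      using subgroup.one_closed[OF H] by (simp add: twisted_transl_vzero_one[OF b, symmetric] vzero_def)
  next
    case (insert k A)
    have "twisted_sum b (\<lambda>i. i \<in> A) (ebas k) = vadd (\<lambda>i. i \<in> A) (ebas k)"
      using insert.hyps by (simp add: twisted_sum_Wsp[OF ebas_Wsp[of k n]])
    also have "\<dots> = (\<lambda>i. i \<in> insert k A)"
      using insert.hyps by (auto simp: vadd_def ebas_def)
    finally have "(\<lambda>i. i \<in> insert k A) = twisted_sum b (\<lambda>i. i \<in> A) (ebas k)" ..
    moreover have "(\<lambda>i. i \<in> A) \<in> Vsp n"
      using insert.hyps by (force simp: Vsp_def)
    ultimately show ?case
      using twisted_transl_twisted_sum_mem[OF _ _ insert.IH basis] insert.hyps ebas_Vsp by auto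
  qed
  then show ?thesis
    using A(2) by simp
qed

text \<open>Every \<open>u\<close> is \<open>w \<oplus> c\<close> with \<open>w \<in> W\<close> and \<open>c\<close> a twisted sum of at most \<open>e\<^sub>1\<close> and \<open>e\<^sub>2\<close>.\<close>

lemma twisted_group_subset: "twisted_group n b \<subseteq> H"
proof
  fix g assume "g \<in> twisted_group n b"
  then obtain u where u: "u \<in> Vsp n" "g = twisted_transl n b u"
    by (auto simp: twisted_group_def)
  define e where "e i = (if u i then ebas i else vzero)" for i
  define c where "c = twisted_sum b (e 1) (e 2)"
  have e: "e i \<in> Vsp n \<and> twisted_transl n b (e i) \<in> H" for i
  proof (cases "u i")
    case True
    then have "1 \<le> i" "i \<le> n"
      using u(1) by (auto simp: Vsp_def)
    then show ?thesis
      using True basis by (simp add: e_def ebas_Vsp)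
  next
    case False
    then show ?thesis
      using subgroup.one_closed[OF H] by (simp add: e_def twisted_transl_vzero_one[OF b])
  qed
  have c: "c \<in> Vsp n" "twisted_transl n b c \<in> H"
    using e Wsp_Vsp[OF b] twisted_transl_twisted_sum_mem by (simp_all add: c_def twisted_sum_Vsp)
  have "\<not> vadd u c 1 \<and> \<not> vadd u c 2"
    using b by (auto simp: Wsp_def c_def e_def twisted_defs)
  then have w: "vadd u c \<in> Wsp n"
    using u c by (simp add: Wsp_def)
  have "twisted_sum b (vadd u c) c = twisted_sum b c (vadd u c)"
    by (rule twisted_sum_commute)
  also have "\<dots> = u"
    by (simp only: twisted_sum_Wsp[OF w]) (simp add: vadd_commute[of u])
  finally show "g \<in> H"
    using twisted_transl_twisted_sum_mem[OF Wsp_Vsp[OF w] c(1) twisted_transl_Wsp_mem[OF w] c(2)] u(2)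
    by simp
qed

end

lemma pi_b_eq_twisted_transl: "pi_b n b = twisted_transl n b (ebas 1)"
  by (auto simp: pi_b_def twisted_transl_def twisted_defs fun_eq_iff)

lemma eps_b_eq_twisted_transl: "eps_b n b = twisted_transl n b (ebas 2)"
  by (auto simp: eps_b_def twisted_transl_def twisted_defs fun_eq_iff)

lemma T_b_eq_twisted_group:
  assumes b: "b \<in> Wsp n" and n: "2 \<le> n"
  shows "T_b n b = twisted_group n b"
proof
  let ?gens = "{pi_b n b, eps_b n b} \<union> {transl n (ebas i) | i. 3 \<le> i \<and> i \<le> n}"
  have "transl n (ebas i) \<in> twisted_group n b" if "3 \<le> i" "i \<le> n" for i
    unfolding twisted_group_def using ebas_Wsp[OF that]
    by (intro image_eqI[where f = "twisted_transl n b" and x = "ebas i"])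
      (simp_all add: twisted_transl_Wsp Wsp_Vsp)
  moreover have "pi_b n b \<in> twisted_group n b" "eps_b n b \<in> twisted_group n b"
    using n by (auto simp: twisted_group_def pi_b_eq_twisted_transl eps_b_eq_twisted_transl ebas_Vsp)
  ultimately have gens: "?gens \<subseteq> twisted_group n b"
    by blast
  then show "T_b n b \<subseteq> twisted_group n b"
    unfolding T_b_def
    by (rule group.generate_subgroup_incl[OF group_BijGroup _ twisted_group_subgroup[OF b]])
  have "subgroup (T_b n b) (SymV n)"
    unfolding T_b_def using gens subgroup.subset[OF twisted_group_subgroup[OF b]]
    by (intro group.generate_is_subgroup[OF group_BijGroup]) blast
  moreover have "twisted_transl n b (ebas i) \<in> T_b n b" if "1 \<le> i" "i \<le> n" for i
  proof -
    have "i = 1 \<or> i = 2 \<or> 3 \<le> i"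
      using that by auto
    then have "twisted_transl n b (ebas i) \<in> ?gens"
      by (elim disjE) (auto simp: pi_b_eq_twisted_transl eps_b_eq_twisted_transl
          twisted_transl_Wsp[OF ebas_Wsp] that)
    then show ?thesis
      unfolding T_b_def by (rule generate.incl)
  qed
  ultimately show "twisted_group n b \<subseteq> T_b n b"
    by (rule twisted_group_subset[OF b])
qed

lemma twisted_group_inj:
  assumes "2 \<le> n" and eq: "twisted_group n b = twisted_group n b'"
  shows "b = b'"
proof -
  have e: "ebas 1 \<in> Vsp n" "ebas 2 \<in> Vsp n"
    using assms(1) by (simp_all add: ebas_Vsp)
  then obtain u where "u \<in> Vsp n" and u: "twisted_transl n b (ebas 1) = twisted_transl n b' u"
    using eq by (auto simp: twisted_group_def)
  then have "u = ebas 1"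
    by (metis twisted_transl_vzero)
  then have "twisted_sum b (ebas 2) (ebas 1) = twisted_sum b' (ebas 2) (ebas 1)"
    using fun_cong[OF u, of "ebas 2"] e(2) by simp
  moreover have "symp12 (ebas 2) (ebas 1)"
    by (simp add: symp12_def ebas_def)
  ultimately have "vadd (vadd (ebas 2) (ebas 1)) b = vadd (vadd (ebas 2) (ebas 1)) b'"
    by (simp add: twisted_sum_def)
  then show ?thesis
    by (metis vadd_cancel)
qed

section \<open>Classification of the good subgroups\<close>

text \<open>\<open>cls x\<close> encodes the coset \<open>x + W\<close> by the first two coordinates of \<open>x\<close>.\<close>

definition cls :: "vec \<Rightarrow> bool \<times> bool" where
  "cls x = (x 1, x 2)"

lemma cls_vadd: "cls (vadd x y) = (fst (cls x) \<noteq> fst (cls y), snd (cls x) \<noteq> snd (cls y))"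
  by (simp add: cls_def vadd_def)

lemma cls_vzero [simp]: "cls vzero = (False, False)"
  by (simp add: cls_def vzero_def)

lemma cls_ebas: "cls (ebas i) = (i = 1, i = 2)"
  by (auto simp: cls_def ebas_def)

lemma cls_eq_iff_Wsp: "x \<in> Vsp n \<Longrightarrow> y \<in> Vsp n \<Longrightarrow> cls x = cls y \<longleftrightarrow> vadd x y \<in> Wsp n"
  by (simp add: Wsp_def cls_def) (auto simp: vadd_def)

lemma symp12_cls: "symp12 x y \<longleftrightarrow> (fst (cls x) \<and> snd (cls y)) \<noteq> (snd (cls x) \<and> fst (cls y))"
  by (simp add: symp12_def cls_def)

text \<open>A fixed-point-free involution \<open>f\<close> of \<open>\<bool>\<^sub>2\<^sup>2\<close> is a translation; here \<open>q = f p\<close> and \<open>a = f 0\<close>.\<close>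

lemma pair_involution_is_translation:
  fixes p q a :: "bool \<times> bool"
  assumes "a \<noteq> (False, False)" "q \<noteq> p"
    and "p = (False, False) \<longleftrightarrow> q = a" and "p = a \<longleftrightarrow> q = (False, False)"
  shows "q = (fst p \<noteq> fst a, snd p \<noteq> snd a)"
  using assms by (cases p; cases q; cases a) auto

locale good_subgroup =
  fixes n :: nat and R :: "(vec \<Rightarrow> vec) set"
  assumes good: "R \<in> good_subgroups n" and two_le: "2 \<le> n"
begin

lemma R_subgroup: "subgroup R (SymV n)"
  and R_elem_abelian: "elem_abelian (SymV n) R"
  and R_regular: "regular_on (Vsp n) R"
  and R_transl: "transl n ` Vsp n \<inter> R = transl n ` Wsp n"
  using good by (auto simp: good_subgroups_def)

lemma R_Bij: "g \<in> R \<Longrightarrow> g \<in> Bij (Vsp n)"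
  using subgroup.subset[OF R_subgroup] by (auto simp: BijGroup_carrier)

lemma R_closed: "g \<in> R \<Longrightarrow> x \<in> Vsp n \<Longrightarrow> g x \<in> Vsp n"
  using Bij_imp_funcset[OF R_Bij] by blast

lemma R_commute:
  assumes "g \<in> R" "k \<in> R" "x \<in> Vsp n"
  shows "g (k x) = k (g x)"
proof -
  have "compose (Vsp n) g k = compose (Vsp n) k g"
    using R_elem_abelian assms by (simp add: elem_abelian_def BijGroup_mult R_Bij)
  then show ?thesis
    using assms(3) by (metis compose_eq)
qed

lemma R_involution:
  assumes "g \<in> R" "x \<in> Vsp n"
  shows "g (g x) = x"
proof -
  have "compose (Vsp n) g g = (\<lambda>x\<in>Vsp n. x)"
    using R_elem_abelian assms by (simp add: elem_abelian_def BijGroup_mult BijGroup_one R_Bij)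
  then show ?thesis
    using assms(2) by (metis compose_eq restrict_apply')
qed

lemma R_unique: "x \<in> Vsp n \<Longrightarrow> y \<in> Vsp n \<Longrightarrow> \<exists>!g. g \<in> R \<and> g x = y"
  using R_regular unfolding regular_on_def by blast

lemma R_transl_iff:
  assumes "v \<in> Vsp n"
  shows "transl n v \<in> R \<longleftrightarrow> v \<in> Wsp n"
proof
  assume "transl n v \<in> R"
  then have "transl n v \<in> transl n ` Wsp n"
    using assms R_transl by blast
  then obtain w where "w \<in> Wsp n" "transl n v = transl n w" by blast
  then show "v \<in> Wsp n"
    by (metis transl_at_vzero)
qed (use R_transl in blast)

lemma R_shift:
  assumes "g \<in> R" "x \<in> Vsp n" "w \<in> Wsp n"
  shows "g (vadd x w) = vadd (g x) w"
  using R_commute[OF assms(1) _ assms(2), of "transl n w"] assms R_transl_iff[of w]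
  by (simp add: Wsp_Vsp transl_def R_closed[OF assms(1,2)])

lemma R_cls:
  assumes g: "g \<in> R" and x: "x \<in> Vsp n"
  shows "cls (g x) = cls (vadd x (g vzero))"
proof (cases "\<exists>y\<in>Vsp n. cls (g y) = cls y")
  case True
  then obtain y where y: "y \<in> Vsp n" "cls (g y) = cls y" by blast
  define w where "w = vadd y (g y)"
  have w: "w \<in> Wsp n"
    using cls_eq_iff_Wsp[OF y(1) R_closed[OF g y(1)]] y(2) by (simp add: w_def)
  have shift: "g z = vadd z w" if z: "z \<in> Vsp n" for z
  proof -
    obtain k where k: "k \<in> R" "k y = z" using R_unique[OF y(1) z] by blast
    have "g y = vadd y w" by (auto simp: w_def vadd_def)
    then show ?thesis
      using R_commute[OF g k(1) y(1)] R_shift[OF k(1) y(1) w] k(2) by simp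
  qed
  have "g vzero = w"
    using shift[OF vzero_Vsp] by simp
  then show ?thesis
    using shift[OF x] by simp
next
  case False
  have respect: "cls (g u) = cls (g v)" if "u \<in> Vsp n" "v \<in> Vsp n" "cls u = cls v" for u v
  proof -
    have "vadd u v \<in> Wsp n" using that cls_eq_iff_Wsp by blast
    then have "g v = vadd (g u) (vadd u v)"
      using R_shift[OF g that(1)] by fastforce
    then show ?thesis using that(3) by (simp add: cls_vadd)
  qed
  have respect_iff: "cls u = cls v \<longleftrightarrow> cls (g u) = cls (g v)" if "u \<in> Vsp n" "v \<in> Vsp n" for u v
    using respect[OF that] respect[OF R_closed[OF g that(1)] R_closed[OF g that(2)]]
      R_involution[OF g that(1)] R_involution[OF g that(2)] by auto
  have "cls (g x) = (fst (cls x) \<noteq> fst (cls (g vzero)), snd (cls x) \<noteq> snd (cls (g vzero)))"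
  proof (rule pair_involution_is_translation)
    have "cls (g y) \<noteq> cls y" if "y \<in> Vsp n" for y
      using False that by blast
    then show "cls (g vzero) \<noteq> (False, False)" "cls (g x) \<noteq> cls x"
      using x by (metis cls_vzero vzero_Vsp, simp)
    show "cls x = (False, False) \<longleftrightarrow> cls (g x) = cls (g vzero)"
      using respect_iff[OF x vzero_Vsp] by simp
    show "cls x = cls (g vzero) \<longleftrightarrow> cls (g x) = (False, False)"
      using respect_iff[OF x R_closed[OF g vzero_Vsp]] R_involution[OF g vzero_Vsp] by simp
  qed
  then show ?thesis by (simp add: cls_vadd)
qed

definition tau :: "vec \<Rightarrow> vec \<Rightarrow> vec" where
  "tau u = (THE g. g \<in> R \<and> g vzero = u)"

lemma tau_spec: "u \<in> Vsp n \<Longrightarrow> tau u \<in> R \<and> tau u vzero = u"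
  unfolding tau_def by (rule theI'[OF R_unique[OF vzero_Vsp]])

lemma tau_in_R: "u \<in> Vsp n \<Longrightarrow> tau u \<in> R"
  and tau_at_vzero: "u \<in> Vsp n \<Longrightarrow> tau u vzero = u"
  using tau_spec by simp_all

lemma tau_closed: "u \<in> Vsp n \<Longrightarrow> v \<in> Vsp n \<Longrightarrow> tau u v \<in> Vsp n"
  by (rule R_closed[OF tau_in_R])

lemma tau_eq: "g \<in> R \<Longrightarrow> tau (g vzero) = g"
  unfolding tau_def by (rule the1_equality[OF R_unique[OF vzero_Vsp R_closed]]) simp_all

lemma tau_commute: "u \<in> Vsp n \<Longrightarrow> v \<in> Vsp n \<Longrightarrow> tau u v = tau v u"
  using R_commute[of "tau u" "tau v" vzero] by (simp add: tau_in_R tau_at_vzero)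

lemma tau_self: "u \<in> Vsp n \<Longrightarrow> tau u u = vzero"
  using R_involution[of "tau u" vzero] by (simp add: tau_in_R tau_at_vzero)

lemma tau_vzero: "v \<in> Vsp n \<Longrightarrow> tau vzero v = v"
  using tau_eq[of "\<lambda>x\<in>Vsp n. x"] subgroup.one_closed[OF R_subgroup] by (simp add: BijGroup_one)

lemma cls_tau: "u \<in> Vsp n \<Longrightarrow> v \<in> Vsp n \<Longrightarrow> cls (tau u v) = cls (vadd u v)"
  using R_cls[OF tau_in_R, of u v] by (auto simp: tau_at_vzero cls_vadd)

definition defect :: "vec \<Rightarrow> vec \<Rightarrow> vec" where
  "defect u v = vadd (vadd (tau u v) u) v"

definition twist :: vec where
  "twist = defect (ebas 1) (ebas 2)"

lemma defect_Wsp: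
  assumes "u \<in> Vsp n" "v \<in> Vsp n"
  shows "defect u v \<in> Wsp n"
proof -
  have "vadd (tau u v) (vadd u v) \<in> Wsp n"
    using cls_eq_iff_Wsp[OF tau_closed[OF assms] vadd_Vsp[OF assms]] cls_tau[OF assms] by simp
  then show ?thesis
    unfolding defect_def vadd_assoc .
qed

lemma defect_commute: "u \<in> Vsp n \<Longrightarrow> v \<in> Vsp n \<Longrightarrow> defect u v = defect v u"
  by (simp add: defect_def tau_commute vadd_ac)

lemma defect_vzero: "v \<in> Vsp n \<Longrightarrow> defect vzero v = vzero"
  by (simp add: defect_def tau_vzero)

lemma defect_vzero_right: "u \<in> Vsp n \<Longrightarrow> defect u vzero = vzero"
  by (simp add: defect_def tau_at_vzero)

lemma defect_self: "u \<in> Vsp n \<Longrightarrow> defect u u = vzero"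
  by (simp add: defect_def tau_self)

lemma defect_shift:
  assumes u: "u \<in> Vsp n" and v: "v \<in> Vsp n" and w: "w \<in> Wsp n"
  shows "defect (vadd u w) v = defect u v"
proof -
  have "tau (vadd u w) v = tau v (vadd u w)"
    using u v Wsp_Vsp[OF w] by (intro tau_commute) simp_all
  also have "\<dots> = vadd (tau v u) w"
    using R_shift[OF tau_in_R[OF v] u w] by simp
  also have "tau v u = tau u v"
    by (rule tau_commute[OF v u])
  finally have "tau (vadd u w) v = vadd (tau u v) w" .
  then show ?thesis
    by (simp add: defect_def) (auto simp: vadd_def fun_eq_iff)
qed

lemma defect_cls:
  assumes "u \<in> Vsp n" "u' \<in> Vsp n" "v \<in> Vsp n" and "cls u = cls u'"
  shows "defect u v = defect u' v"
  using defect_shift[of u v "vadd u u'"] assms cls_eq_iff_Wsp by simp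

lemma defect_tau: "u \<in> Vsp n \<Longrightarrow> v \<in> Vsp n \<Longrightarrow> defect u (tau u v) = defect u v"
  using R_involution[OF tau_in_R] by (simp add: defect_def) (auto simp: vadd_def fun_eq_iff)

lemma defect_vadd:
  assumes "u \<in> Vsp n" "v \<in> Vsp n"
  shows "defect u (vadd u v) = defect u v"
proof -
  have "defect u (vadd u v) = defect (vadd u v) u"
    using assms by (intro defect_commute) simp_all
  also have "\<dots> = defect (tau u v) u"
    using assms by (intro defect_cls) (simp_all add: tau_closed cls_tau)
  also have "\<dots> = defect u (tau u v)"
    using assms by (intro defect_commute) (simp_all add: tau_closed)
  also have "\<dots> = defect u v"
    by (rule defect_tau[OF assms])
  finally show ?thesis .
qed

lemma defect_representatives:
  assumes "r \<in> {vzero, ebas 1, ebas 2, vadd (ebas 1) (ebas 2)}"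
    and "s \<in> {vzero, ebas 1, ebas 2, vadd (ebas 1) (ebas 2)}"
  shows "defect r s = smult (symp12 r s) twist"
proof -
  let ?c = "vadd (ebas 1) (ebas 2)"
  have e: "ebas 1 \<in> Vsp n" "ebas 2 \<in> Vsp n" "?c \<in> Vsp n"
    using two_le by (simp_all add: ebas_Vsp)
  have twist: "defect (ebas 1) (ebas 2) = twist" "defect (ebas 1) ?c = twist"
      "defect (ebas 2) ?c = twist"
    using defect_vadd[of "ebas 1" "ebas 2"] defect_vadd[of "ebas 2" "ebas 1"] e
    by (simp_all add: twist_def defect_commute[of "ebas 2"] vadd_commute[of "ebas 2"])
  moreover have "defect (ebas 2) (ebas 1) = twist" "defect ?c (ebas 1) = twist"
      "defect ?c (ebas 2) = twist"
    using defect_commute[OF e(2) e(1)] defect_commute[OF e(3) e(1)] defect_commute[OF e(3) e(2)]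
      twist by simp_all
  ultimately show ?thesis
    using assms e
    by (elim insertE emptyE)
      (simp_all add: defect_vzero defect_vzero_right defect_self symp12_cls cls_vadd cls_ebas)
qed

lemma defect_eq:
  assumes u: "u \<in> Vsp n" and v: "v \<in> Vsp n"
  shows "defect u v = smult (symp12 u v) twist"
proof -
  let ?reps = "{vzero, ebas 1, ebas 2, vadd (ebas 1) (ebas 2)}"
  have rep: "cls x \<in> cls ` ?reps" for x
    by (cases "cls x") (auto simp: cls_vadd cls_ebas)
  obtain r s where r: "r \<in> ?reps" "cls u = cls r" and s: "s \<in> ?reps" "cls v = cls s"
    using rep[of u] rep[of v] by blast
  have rV: "r \<in> Vsp n" and sV: "s \<in> Vsp n"
    using r(1) s(1) two_le by (auto simp: ebas_Vsp)
  have "defect u v = defect r v"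
    by (rule defect_cls[OF u rV v r(2)])
  also have "\<dots> = defect v r"
    by (rule defect_commute[OF rV v])
  also have "\<dots> = defect s r"
    by (rule defect_cls[OF v sV rV s(2)])
  also have "\<dots> = defect r s"
    by (rule defect_commute[OF sV rV])
  also have "\<dots> = smult (symp12 u v) twist"
    using defect_representatives[OF r(1) s(1)] r(2) s(2) by (simp add: symp12_cls)
  finally show ?thesis .
qed

lemma tau_eq_twisted_transl:
  assumes u: "u \<in> Vsp n"
  shows "tau u = twisted_transl n twist u"
proof (rule extensionalityI)
  show "tau u \<in> extensional (Vsp n)"
    using Bij_imp_extensional[OF R_Bij[OF tau_in_R[OF u]]] .
  fix x assume x: "x \<in> Vsp n"
  have "tau u x = vadd (vadd u x) (defect u x)"
    by (auto simp: defect_def vadd_def fun_eq_iff)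
  then show "tau u x = twisted_transl n twist u x"
    using defect_eq[OF u x] x by (simp add: twisted_sum_def symp12_commute[of u] vadd_commute[of u])
qed (simp add: twisted_transl_def)

lemma R_eq_twisted_group: "R = twisted_group n twist"
  unfolding twisted_group_def
proof (intro equalityI subsetI)
  fix g assume "g \<in> R"
  then show "g \<in> twisted_transl n twist ` Vsp n"
    using tau_eq tau_eq_twisted_transl R_closed by (metis image_eqI vzero_Vsp)
qed (auto simp: tau_eq_twisted_transl[symmetric] tau_in_R)

lemma twist_Wsp: "twist \<in> Wsp n"
  using defect_Wsp two_le by (simp add: twist_def ebas_Vsp)

lemma twist_nonzero: "twist \<noteq> vzero"
proof
  assume "twist = vzero"
  moreover have e1: "ebas 1 \<in> Vsp n" using two_le by (simp add: ebas_Vsp)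
  ultimately have "transl n (ebas 1) \<in> R"
    using R_eq_twisted_group by (auto simp: twisted_group_def twisted_transl_def transl_def twisted_sum_vzero_twist)
  then show False
    using R_transl_iff[OF e1] by (simp add: Wsp_def ebas_def)
qed

lemma ex_twisted_group: "\<exists>b\<in>Wsp n - {vzero}. R = twisted_group n b"
  using twist_Wsp twist_nonzero R_eq_twisted_group by blast

end

theorem mainTheorem8:
  fixes n :: nat
  assumes "n > 2"
  shows "good_subgroups n = T_b n ` (Wsp n - {vzero})
       \<and> inj_on (T_b n) (Wsp n - {vzero})
       \<and> card (good_subgroups n) = 2 ^ (n - 2) - 1"
proof -
  have n: "2 \<le> n" using assms by simp
  have T_b: "T_b n b = twisted_group n b" if "b \<in> Wsp n - {vzero}" for b
    using that T_b_eq_twisted_group[OF _ n] by blast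
  have classification: "good_subgroups n = T_b n ` (Wsp n - {vzero})"
  proof (intro equalityI subsetI)
    fix R assume "R \<in> good_subgroups n"
    then obtain b where "b \<in> Wsp n - {vzero}" "R = twisted_group n b"
      using good_subgroup.ex_twisted_group[OF good_subgroup.intro] n by blast
    then show "R \<in> T_b n ` (Wsp n - {vzero})"
      using T_b by blast
  qed (use T_b twisted_group_good n in auto)
  have inj: "inj_on (T_b n) (Wsp n - {vzero})"
    by (intro inj_onI) (metis T_b twisted_group_inj n)
  have "card (good_subgroups n) = card (Wsp n - {vzero})"
    unfolding classification by (rule card_image[OF inj])
  also have "\<dots> = 2 ^ (n - 2) - 1"
    by (simp add: finite_Wsp vzero_Wsp card_Wsp)
  finally show ?thesis
    using classification inj by blast
qed

end
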